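(* Let $(M,\varphi,\xi,\eta,g)$ be a Sasakian manifold with nonnegative $\varphi$-bisectional curvature. Let $x\in M$ and $X,W\in T_xM$ be such that $\eta(X)=0$ and $X,\varphi X,W$ are mutually orthonormal. Then $$R(X,W,X,W)+R(\varphi X,W,\varphi X,W)\ge 0,$$ where $R(X,Y,Z,U)=g(R(X,Y)U,Z)$, so that $R(X,Y,X,Y)=g(R(X,Y)Y,X)$ is the sectional curvature of the plane spanned by orthonormal $X,Y$.
   Context: A Sasakian manifold $(M,\varphi,\xi,\eta,g)$ is a contact metric manifold satisfying $(\nabla_X\varphi)Y=g(X,Y)\xi-\eta(Y)X$. It has nonnegative $\varphi$-bisectional curvature if $K(X,Y)+K(X,\varphi Y)\ge 0$ for every $x\in M$ and all $X,Y\in T_xM$ such that $X,Y,\varphi Y,\xi_x$ are mutually orthonormal, where $K(X,Y)=g(R(X,Y)Y,X)$. *)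

theory Defs
  imports "HOL-Analysis.Analysis"
begin

text \<open>
  Since all notions in the statement
  (Levi-Civita connection, curvature, the Sasakian condition, phi-bisectional curvature)
  are local, we work on an open set U of the coordinate space real^'n (a chart of M),
  with tensor fields given by their coordinate expressions.
  Metric: G p is the (symmetric, positive definite) Gram matrix at p, g_p(u,v) = u . (G p v).
  phi: Phi p is the matrix of the (1,1)-tensor phi at p; xi is a vector field;
  eta p is the coefficient vector of the 1-form eta at p, eta_p(v) = eta p . v.
\<close>

fun Ck :: "nat \<Rightarrow> 'a::real_normed_vector set \<Rightarrow> ('a \<Rightarrow> 'b::real_normed_vector) \<Rightarrow> bool" where
  "Ck 0 U f = continuous_on U f"
| "Ck (Suc k) U f = (f differentiable_on U \<and> (\<forall>v. Ck k U (\<lambda>p. frechet_derivative f (at p) v)))"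

definition smooth_on :: "'a::real_normed_vector set \<Rightarrow> ('a \<Rightarrow> 'b::real_normed_vector) \<Rightarrow> bool" where
  "smooth_on U f \<longleftrightarrow> (\<forall>k. Ck k U f)"

definition gm :: "(real^'n \<Rightarrow> real^'n^'n) \<Rightarrow> real^'n \<Rightarrow> real^'n \<Rightarrow> real^'n \<Rightarrow> real" where
  "gm G p u v = u \<bullet> (G p *v v)"

definition dgm :: "(real^'n \<Rightarrow> real^'n^'n) \<Rightarrow> real^'n \<Rightarrow> real^'n \<Rightarrow> real^'n \<Rightarrow> real^'n \<Rightarrow> real" where
  "dgm G p w a b = a \<bullet> (frechet_derivative G (at p) w *v b)"

text \<open>Christoffel symbols: Gamma_p(u,v) is the vector with
  g_p(Gamma_p(u,v), w) = 1/2 (dG(u)(v,w) + dG(v)(u,w) - dG(w)(u,v)).\<close>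
definition Christoffel :: "(real^'n \<Rightarrow> real^'n^'n) \<Rightarrow> real^'n \<Rightarrow> real^'n \<Rightarrow> real^'n \<Rightarrow> real^'n" where
  "Christoffel G p u v = matrix_inv (G p) *v
     (\<chi> k. (dgm G p u v (axis k 1) + dgm G p v u (axis k 1) - dgm G p (axis k 1) u v) / 2)"

definition nabla :: "(real^'n \<Rightarrow> real^'n^'n) \<Rightarrow> real^'n \<Rightarrow> (real^'n \<Rightarrow> real^'n) \<Rightarrow> real^'n \<Rightarrow> real^'n" where
  "nabla G u Y p = frechet_derivative Y (at p) u + Christoffel G p u (Y p)"

text \<open>Curvature R(u,v)w = nabla_u nabla_v w - nabla_v nabla_u w - nabla_[u,v] w,
  computed with the constant coordinate extensions of u, v, w (so [u,v] = 0).\<close>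
definition curv :: "(real^'n \<Rightarrow> real^'n^'n) \<Rightarrow> real^'n \<Rightarrow> real^'n \<Rightarrow> real^'n \<Rightarrow> real^'n \<Rightarrow> real^'n" where
  "curv G p u v w = nabla G u (\<lambda>q. nabla G v (\<lambda>r. w) q) p - nabla G v (\<lambda>q. nabla G u (\<lambda>r. w) q) p"

definition Rtensor :: "(real^'n \<Rightarrow> real^'n^'n) \<Rightarrow> real^'n \<Rightarrow> real^'n \<Rightarrow> real^'n \<Rightarrow> real^'n \<Rightarrow> real^'n \<Rightarrow> real" where
  "Rtensor G p X Y Z U = gm G p (curv G p X Y U) Z"

definition Kcurv :: "(real^'n \<Rightarrow> real^'n^'n) \<Rightarrow> real^'n \<Rightarrow> real^'n \<Rightarrow> real^'n \<Rightarrow> real" where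
  "Kcurv G p X Y = gm G p (curv G p X Y Y) X"

definition orthonormal_list :: "(real^'n \<Rightarrow> real^'n^'n) \<Rightarrow> real^'n \<Rightarrow> (real^'n) list \<Rightarrow> bool" where
  "orthonormal_list G p vs \<longleftrightarrow>
     (\<forall>i<length vs. \<forall>j<length vs. gm G p (vs!i) (vs!j) = (if i = j then 1 else 0))"

text \<open>(nabla_u phi) v, computed with the constant extension of v.\<close>
definition nabla_phi :: "(real^'n \<Rightarrow> real^'n^'n) \<Rightarrow> (real^'n \<Rightarrow> real^'n^'n) \<Rightarrow> real^'n \<Rightarrow> real^'n \<Rightarrow> real^'n \<Rightarrow> real^'n" where
  "nabla_phi G Phi p u v = nabla G u (\<lambda>q. Phi q *v v) p - Phi p *v nabla G u (\<lambda>q. v) p"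

text \<open>d eta(u,v) with the convention d eta(X,Y) = 1/2 (X eta(Y) - Y eta(X) - eta([X,Y])).\<close>
definition d_eta :: "(real^'n \<Rightarrow> real^'n) \<Rightarrow> real^'n \<Rightarrow> real^'n \<Rightarrow> real^'n \<Rightarrow> real" where
  "d_eta eta p u v = ((frechet_derivative eta (at p) u) \<bullet> v - (frechet_derivative eta (at p) v) \<bullet> u) / 2"

definition riemannian_metric_on :: "(real^'n) set \<Rightarrow> (real^'n \<Rightarrow> real^'n^'n) \<Rightarrow> bool" where
  "riemannian_metric_on U G \<longleftrightarrow> smooth_on U G \<and>
     (\<forall>p\<in>U. transpose (G p) = G p \<and> (\<forall>v. v \<noteq> 0 \<longrightarrow> gm G p v v > 0))"

definition almost_contact_metric_on ::
  "(real^'n) set \<Rightarrow> (real^'n \<Rightarrow> real^'n^'n) \<Rightarrow> (real^'n \<Rightarrow> real^'n^'n) \<Rightarrow> (real^'n \<Rightarrow> real^'n) \<Rightarrow> (real^'n \<Rightarrow> real^'n) \<Rightarrow> bool" where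
  "almost_contact_metric_on U G Phi xi eta \<longleftrightarrow>
     open U \<and> riemannian_metric_on U G \<and> smooth_on U Phi \<and> smooth_on U xi \<and> smooth_on U eta \<and>
     (\<forall>p\<in>U. eta p \<bullet> xi p = 1 \<and>
        (\<forall>v. Phi p *v (Phi p *v v) = - v + (eta p \<bullet> v) *\<^sub>R xi p) \<and>
        (\<forall>u v. gm G p (Phi p *v u) (Phi p *v v) = gm G p u v - (eta p \<bullet> u) * (eta p \<bullet> v)))"

definition contact_metric_on ::
  "(real^'n) set \<Rightarrow> (real^'n \<Rightarrow> real^'n^'n) \<Rightarrow> (real^'n \<Rightarrow> real^'n^'n) \<Rightarrow> (real^'n \<Rightarrow> real^'n) \<Rightarrow> (real^'n \<Rightarrow> real^'n) \<Rightarrow> bool" where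
  "contact_metric_on U G Phi xi eta \<longleftrightarrow> almost_contact_metric_on U G Phi xi eta \<and>
     (\<forall>p\<in>U. \<forall>u v. d_eta eta p u v = gm G p u (Phi p *v v))"

definition sasakian_on ::
  "(real^'n) set \<Rightarrow> (real^'n \<Rightarrow> real^'n^'n) \<Rightarrow> (real^'n \<Rightarrow> real^'n^'n) \<Rightarrow> (real^'n \<Rightarrow> real^'n) \<Rightarrow> (real^'n \<Rightarrow> real^'n) \<Rightarrow> bool" where
  "sasakian_on U G Phi xi eta \<longleftrightarrow> contact_metric_on U G Phi xi eta \<and>
     (\<forall>p\<in>U. \<forall>u v. nabla_phi G Phi p u v = gm G p u v *\<^sub>R xi p - (eta p \<bullet> v) *\<^sub>R u)"

definition nonneg_phi_bisectional_on ::
  "(real^'n) set \<Rightarrow> (real^'n \<Rightarrow> real^'n^'n) \<Rightarrow> (real^'n \<Rightarrow> real^'n^'n) \<Rightarrow> (real^'n \<Rightarrow> real^'n) \<Rightarrow> bool" where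
  "nonneg_phi_bisectional_on U G Phi xi \<longleftrightarrow>
     (\<forall>p\<in>U. \<forall>X Y. orthonormal_list G p [X, Y, Phi p *v Y, xi p] \<longrightarrow>
        Kcurv G p X Y + Kcurv G p X (Phi p *v Y) \<ge> 0)"

end

theory Submission
  imports Defs
begin

(* Write W = Z + \<eta>(W) \<xi> with Z horizontal. On a Sasakian manifold \<nabla>\<xi> = -\<phi>, hence
   R(U,V)\<xi> = \<eta>(V) U - \<eta>(U) V, and together with the symmetries of the curvature tensor this
   gives K(V,W) = K(Z,V) + \<eta>(W)^2 for every unit horizontal V. Taking V = X and V = \<phi>X reduces
   the claim to K(Z,X) + K(Z,\<phi>X) >= 0, which is the \<phi>-bisectional hypothesis applied to the
   unit vector Z/|Z|, orthogonal to X, \<phi>X and \<xi>. As the structure is given in coordinates,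
   the curvature identities are derived from the coordinate formulas; this needs the symmetry
   of the second derivatives of G and \<xi>. *)

section \<open>Calculus on normed spaces\<close>

lemma has_derivative_frechet_derivative:
  "f differentiable (at p) \<Longrightarrow> (f has_derivative frechet_derivative f (at p)) (at p)"
  using frechet_derivative_works by blast

lemma frechet_derivative_eqI:
  "(f has_derivative D) (at p) \<Longrightarrow> frechet_derivative f (at p) v = D v"
  using frechet_derivative_at by metis

lemma has_derivative_eq_on_open:
  assumes f: "(f has_derivative D) (at p)" and g: "(g has_derivative D') (at p)"
    and S: "open S" "p \<in> S" and eq: "\<And>q. q \<in> S \<Longrightarrow> f q = g q"
  shows "D h = D' h"
proof -
  have "(g has_derivative D) (at p)"
    by (rule has_derivative_transform_within_open[OF f S eq])
  with g show ?thesis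
    using has_derivative_unique by metis
qed

lemma differentiable_transform_within_open:
  "f differentiable (at p) \<Longrightarrow> open S \<Longrightarrow> p \<in> S \<Longrightarrow> (\<And>q. q \<in> S \<Longrightarrow> f q = g q)
    \<Longrightarrow> g differentiable (at p)"
  unfolding differentiable_def using has_derivative_transform_within_open by blast

lemma differentiable_bounded_linear_compose:
  assumes "bounded_linear L" "f differentiable (at p)"
  shows "(\<lambda>q. L (f q)) differentiable (at p)"
  using bounded_linear.has_derivative[OF assms(1) has_derivative_frechet_derivative[OF assms(2)]]
  by (rule differentiableI)

lemma frechet_derivative_bounded_linear_compose:
  assumes "bounded_linear L" "f differentiable (at p)"
  shows "frechet_derivative (\<lambda>q. L (f q)) (at p) v = L (frechet_derivative f (at p) v)"
  using bounded_linear.has_derivative[OF assms(1) has_derivative_frechet_derivative[OF assms(2)]]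
  by (rule frechet_derivative_eqI)

lemma linear_eq_sum_Basis:
  fixes f :: "'b::euclidean_space \<Rightarrow> 'c::real_normed_vector"
  assumes "linear f"
  shows "f c = (\<Sum>b\<in>Basis. (c \<bullet> b) *\<^sub>R f b)"
proof -
  have "f c = f (\<Sum>b\<in>Basis. (c \<bullet> b) *\<^sub>R b)"
    by (simp add: euclidean_representation)
  also have "\<dots> = (\<Sum>b\<in>Basis. (c \<bullet> b) *\<^sub>R f b)"
    by (simp add: linear_sum[OF assms] linear_scale[OF assms] o_def)
  finally show ?thesis .
qed

lemma frechet_derivative_linear_family:
  fixes B :: "'a::real_normed_vector \<Rightarrow> 'b::euclidean_space \<Rightarrow> 'c::real_normed_vector"
  assumes S: "open S" "q \<in> S"
    and lin: "\<And>r. r \<in> S \<Longrightarrow> linear (B r)"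
    and dB: "\<And>c. (\<lambda>r. B r c) differentiable (at q)"
  shows "frechet_derivative (\<lambda>r. B r c) (at q) h
    = (\<Sum>b\<in>Basis. (c \<bullet> b) *\<^sub>R frechet_derivative (\<lambda>r. B r b) (at q) h)"
proof -
  have "((\<lambda>r. \<Sum>b\<in>Basis. (c \<bullet> b) *\<^sub>R B r b) has_derivative
      (\<lambda>h. \<Sum>b\<in>Basis. (c \<bullet> b) *\<^sub>R frechet_derivative (\<lambda>r. B r b) (at q) h)) (at q)"
    by (intro has_derivative_sum has_derivative_scaleR_right has_derivative_frechet_derivative dB)
  then have "((\<lambda>r. B r c) has_derivative
      (\<lambda>h. \<Sum>b\<in>Basis. (c \<bullet> b) *\<^sub>R frechet_derivative (\<lambda>r. B r b) (at q) h)) (at q)"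
    by (rule has_derivative_transform_within_open[OF _ S])
      (simp add: linear_eq_sum_Basis[OF lin, symmetric])
  then show ?thesis
    by (rule frechet_derivative_eqI)
qed

lemma linear_frechet_derivative_linear_family:
  fixes B :: "'a::real_normed_vector \<Rightarrow> 'b::euclidean_space \<Rightarrow> 'c::real_normed_vector"
  assumes "open S" "q \<in> S" "\<And>r. r \<in> S \<Longrightarrow> linear (B r)" "\<And>c. (\<lambda>r. B r c) differentiable (at q)"
  shows "linear (\<lambda>c. frechet_derivative (\<lambda>r. B r c) (at q) h)"
proof -
  have "(\<lambda>c. frechet_derivative (\<lambda>r. B r c) (at q) h)
      = (\<lambda>c. \<Sum>b\<in>Basis. (c \<bullet> b) *\<^sub>R frechet_derivative (\<lambda>r. B r b) (at q) h)"
    by (rule ext) (rule frechet_derivative_linear_family[OF assms])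
  moreover have "linear (\<lambda>c. \<Sum>b\<in>Basis. (c \<bullet> b) *\<^sub>R frechet_derivative (\<lambda>r. B r b) (at q) h)"
    by (rule linearI) (simp_all add: inner_add_left scaleR_add_left sum.distrib scaleR_sum_right)
  ultimately show ?thesis
    by (simp only:)
qed

lemma has_derivative_linear_family_apply:
  fixes B :: "'a::real_normed_vector \<Rightarrow> 'b::euclidean_space \<Rightarrow> 'c::real_normed_vector"
  assumes S: "open S" "q \<in> S"
    and lin: "\<And>r. r \<in> S \<Longrightarrow> linear (B r)"
    and dB: "\<And>c. (\<lambda>r. B r c) differentiable (at q)"
    and dy: "y differentiable (at q)"
  shows "((\<lambda>r. B r (y r)) has_derivative
     (\<lambda>h. frechet_derivative (\<lambda>r. B r (y q)) (at q) h + B q (frechet_derivative y (at q) h))) (at q)"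
proof -
  have "((\<lambda>r. \<Sum>b\<in>Basis. (y r \<bullet> b) *\<^sub>R B r b) has_derivative
     (\<lambda>h. \<Sum>b\<in>Basis. (y q \<bullet> b) *\<^sub>R frechet_derivative (\<lambda>r. B r b) (at q) h
            + (frechet_derivative y (at q) h \<bullet> b) *\<^sub>R B q b)) (at q)"
    by (intro has_derivative_sum has_derivative_scaleR has_derivative_inner_left
        has_derivative_frechet_derivative dy dB)
  then have "((\<lambda>r. B r (y r)) has_derivative
     (\<lambda>h. \<Sum>b\<in>Basis. (y q \<bullet> b) *\<^sub>R frechet_derivative (\<lambda>r. B r b) (at q) h
            + (frechet_derivative y (at q) h \<bullet> b) *\<^sub>R B q b)) (at q)"
    by (rule has_derivative_transform_within_open[OF _ S])
      (simp add: linear_eq_sum_Basis[OF lin, symmetric])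
  moreover have "B q (frechet_derivative y (at q) h)
      = (\<Sum>b\<in>Basis. (frechet_derivative y (at q) h \<bullet> b) *\<^sub>R B q b)" for h
    using linear_eq_sum_Basis[OF lin[OF S(2)]] .
  ultimately show ?thesis
    by (simp add: frechet_derivative_linear_family[OF S lin dB, of "y q"] sum.distrib)
qed

lemma segment_mean_value:
  fixes f :: "'a::real_normed_vector \<Rightarrow> real"
  assumes t: "0 < t"
    and f': "\<And>s. 0 \<le> s \<Longrightarrow> s \<le> t \<Longrightarrow> (f has_derivative f' s) (at (a + s *\<^sub>R v))"
  shows "\<exists>s. 0 < s \<and> s < t \<and> f (a + t *\<^sub>R v) - f a = t * f' s v"
proof -
  have g': "((\<lambda>s. f (a + s *\<^sub>R v)) has_derivative (\<lambda>h. h * f' s v)) (at s)"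
    if "0 \<le> s" "s \<le> t" for s
  proof -
    have "((\<lambda>s. a + s *\<^sub>R v) has_derivative (\<lambda>h. h *\<^sub>R v)) (at s)"
      by (intro derivative_eq_intros) auto
    from diff_chain_at[OF this f'[OF that]] show ?thesis
      using linear_scale[OF has_derivative_linear[OF f'[OF that]]] by (simp add: o_def)
  qed
  have "continuous_on {0..t} (\<lambda>s. f (a + s *\<^sub>R v))"
    by (intro continuous_at_imp_continuous_on ballI has_derivative_continuous[OF g']) auto
  then obtain s where "0 < s" "s < t" "f (a + t *\<^sub>R v) - f (a + 0 *\<^sub>R v) = t * f' s v"
    using mvt[OF t, of "\<lambda>s. f (a + s *\<^sub>R v)" "\<lambda>s h. h * f' s v"] g' by auto
  then show ?thesis by auto
qed

lemma second_difference_mean_value: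
  fixes f :: "'a::real_normed_vector \<Rightarrow> real"
  assumes t: "0 < t"
    and in_S: "\<And>s r. 0 \<le> s \<Longrightarrow> s \<le> t \<Longrightarrow> 0 \<le> r \<Longrightarrow> r \<le> t \<Longrightarrow> p + s *\<^sub>R u + r *\<^sub>R v \<in> S"
    and f1: "\<And>q. q \<in> S \<Longrightarrow> (f has_derivative f1 q) (at q)"
    and f2: "\<And>q w. q \<in> S \<Longrightarrow> ((\<lambda>q. f1 q w) has_derivative f2 q w) (at q)"
  shows "\<exists>s r. 0 < s \<and> s < t \<and> 0 < r \<and> r < t \<and>
     f (p + t *\<^sub>R u + t *\<^sub>R v) - f (p + t *\<^sub>R u) - f (p + t *\<^sub>R v) + f p
       = t * (t * f2 (p + s *\<^sub>R u + r *\<^sub>R v) u v)"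
proof -
  have "((\<lambda>q. f (q + t *\<^sub>R v) - f q) has_derivative
      (\<lambda>w. f1 (p + s *\<^sub>R u + t *\<^sub>R v) w - f1 (p + s *\<^sub>R u) w)) (at (p + s *\<^sub>R u))"
    if "0 \<le> s" "s \<le> t" for s
  proof -
    have "((\<lambda>q. q + t *\<^sub>R v) has_derivative id) (at (p + s *\<^sub>R u))"
      by (intro derivative_eq_intros) auto
    from diff_chain_at[OF this f1[OF in_S[OF that, of t]]]
    have "((\<lambda>q. f (q + t *\<^sub>R v)) has_derivative f1 (p + s *\<^sub>R u + t *\<^sub>R v)) (at (p + s *\<^sub>R u))"
      using t by (simp add: o_def)
    from has_derivative_diff[OF this f1[of "p + s *\<^sub>R u"]] show ?thesis
      using in_S[OF that, of 0] t by simp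
  qed
  from segment_mean_value[OF t this]
  obtain s where s: "0 < s" "s < t"
    "f (p + t *\<^sub>R u + t *\<^sub>R v) - f (p + t *\<^sub>R u) - (f (p + t *\<^sub>R v) - f p)
       = t * (f1 (p + s *\<^sub>R u + t *\<^sub>R v) u - f1 (p + s *\<^sub>R u) u)"
    by (auto simp: add.assoc)
  have "((\<lambda>q. f1 q u) has_derivative f2 (p + s *\<^sub>R u + r *\<^sub>R v) u) (at (p + s *\<^sub>R u + r *\<^sub>R v))"
    if "0 \<le> r" "r \<le> t" for r
    using f2 in_S s that by simp
  from segment_mean_value[OF t this]
  obtain r where r: "0 < r" "r < t"
    "f1 (p + s *\<^sub>R u + t *\<^sub>R v) u - f1 (p + s *\<^sub>R u) u = t * f2 (p + s *\<^sub>R u + r *\<^sub>R v) u v"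
    by blast
  have "f (p + t *\<^sub>R u + t *\<^sub>R v) - f (p + t *\<^sub>R u) - f (p + t *\<^sub>R v) + f p
      = t * (f1 (p + s *\<^sub>R u + t *\<^sub>R v) u - f1 (p + s *\<^sub>R u) u)"
    using s(3) by linarith
  also have "\<dots> = t * (t * f2 (p + s *\<^sub>R u + r *\<^sub>R v) u v)"
    by (simp only: r(3))
  finally show ?thesis using s(1,2) r(1,2) by blast
qed

lemma mixed_second_derivatives_meet:
  fixes f :: "'a::real_normed_vector \<Rightarrow> real"
  assumes d: "0 < d" "ball p d \<subseteq> S"
    and f1: "\<And>q. q \<in> S \<Longrightarrow> (f has_derivative f1 q) (at q)"
    and f2: "\<And>q w. q \<in> S \<Longrightarrow> ((\<lambda>q. f1 q w) has_derivative f2 q w) (at q)"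
  shows "\<exists>c c'. dist c p < d \<and> dist c' p < d \<and> f2 c u v = f2 c' v u"
proof -
  define t where "t = d / (2 * (norm u + norm v + 1))"
  have den: "0 < 2 * (norm u + norm v + 1)"
    by (simp add: add_nonneg_pos)
  have "0 < t"
    using d den by (simp add: t_def)
  have "t * (norm u + norm v) < t * (2 * (norm u + norm v + 1))"
    using \<open>0 < t\<close> by (simp add: add_nonneg_pos)
  also have "\<dots> = d"
    using den by (simp add: t_def)
  finally have t: "0 < t" "t * (norm u + norm v) < d"
    using \<open>0 < t\<close> by simp_all
  have near: "dist (p + s *\<^sub>R a + r *\<^sub>R b) p < d"
    if "0 \<le> s" "s \<le> t" "0 \<le> r" "r \<le> t" "norm a + norm b = norm u + norm v" for s r a b
  proof -
    have "norm (s *\<^sub>R a + r *\<^sub>R b) \<le> s * norm a + r * norm b"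
      using norm_triangle_ineq[of "s *\<^sub>R a" "r *\<^sub>R b"] that by simp
    also have "\<dots> \<le> t * norm a + t * norm b"
      using that by (intro add_mono mult_right_mono) auto
    also have "\<dots> = t * (norm u + norm v)"
      by (simp only: distrib_left[symmetric] that(5))
    finally show ?thesis
      using t(2) by (simp add: dist_norm add.assoc)
  qed
  have in_S: "p + s *\<^sub>R a + r *\<^sub>R b \<in> S"
    if "0 \<le> s" "s \<le> t" "0 \<le> r" "r \<le> t" "norm a + norm b = norm u + norm v" for s r a b
    using near[OF that] d(2) by (auto simp: dist_commute)
  obtain s r where "0 < s" "s < t" "0 < r" "r < t" and uv:
    "f (p + t *\<^sub>R u + t *\<^sub>R v) - f (p + t *\<^sub>R u) - f (p + t *\<^sub>R v) + f p
       = t * (t * f2 (p + s *\<^sub>R u + r *\<^sub>R v) u v)"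
    using second_difference_mean_value[OF t(1) in_S[where a = u and b = v, OF _ _ _ _ refl] f1 f2]
    by blast
  obtain s' r' where "0 < s'" "s' < t" "0 < r'" "r' < t" and vu:
    "f (p + t *\<^sub>R v + t *\<^sub>R u) - f (p + t *\<^sub>R v) - f (p + t *\<^sub>R u) + f p
       = t * (t * f2 (p + s' *\<^sub>R v + r' *\<^sub>R u) v u)"
    using second_difference_mean_value[OF t(1)
        in_S[where a = v and b = u, OF _ _ _ _ add.commute] f1 f2]
    by blast
  have "p + t *\<^sub>R v + t *\<^sub>R u = p + t *\<^sub>R u + t *\<^sub>R v"
    by (simp add: algebra_simps)
  with uv vu have "t * (t * f2 (p + s *\<^sub>R u + r *\<^sub>R v) u v)
      = t * (t * f2 (p + s' *\<^sub>R v + r' *\<^sub>R u) v u)"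
    by (simp only:)
  then have "f2 (p + s *\<^sub>R u + r *\<^sub>R v) u v = f2 (p + s' *\<^sub>R v + r' *\<^sub>R u) v u"
    using t(1) by simp
  moreover have "dist (p + s *\<^sub>R u + r *\<^sub>R v) p < d" "dist (p + s' *\<^sub>R v + r' *\<^sub>R u) p < d"
    using near \<open>0 < s\<close> \<open>s < t\<close> \<open>0 < r\<close> \<open>r < t\<close> \<open>0 < s'\<close> \<open>s' < t\<close> \<open>0 < r'\<close> \<open>r' < t\<close>
    by (simp_all add: add.commute)
  ultimately show ?thesis
    by blast
qed

lemma second_derivative_symmetric:
  fixes f :: "'a::real_normed_vector \<Rightarrow> real"
  assumes S: "open S" "p \<in> S"
    and f1: "\<And>q. q \<in> S \<Longrightarrow> (f has_derivative f1 q) (at q)"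
    and f2: "\<And>q w. q \<in> S \<Longrightarrow> ((\<lambda>q. f1 q w) has_derivative f2 q w) (at q)"
    and cont: "\<And>w z. continuous_on S (\<lambda>q. f2 q w z)"
  shows "f2 p u v = f2 p v u"
proof (rule ccontr)
  assume "f2 p u v \<noteq> f2 p v u"
  define e where "e = \<bar>f2 p u v - f2 p v u\<bar> / 2"
  have e: "0 < e"
    using \<open>f2 p u v \<noteq> f2 p v u\<close> by (simp add: e_def)
  have "((\<lambda>q. f2 q w z) \<longlongrightarrow> f2 p w z) (nhds p)" for w z
  proof -
    have "isCont (\<lambda>q. f2 q w z) p"
      using cont S continuous_on_eq_continuous_at by blast
    then show ?thesis
      unfolding isCont_def tendsto_at_iff_tendsto_nhds[of "\<lambda>q. f2 q w z" p] .
  qed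
  then have "\<forall>\<^sub>F q in nhds p.
      q \<in> S \<and> dist (f2 q u v) (f2 p u v) < e \<and> dist (f2 q v u) (f2 p v u) < e"
    using e S by (intro eventually_conj tendstoD) (auto simp: eventually_nhds_in_open)
  then obtain d where d: "0 < d" and close: "\<And>q. dist q p < d \<Longrightarrow>
      q \<in> S \<and> \<bar>f2 q u v - f2 p u v\<bar> < e \<and> \<bar>f2 q v u - f2 p v u\<bar> < e"
    unfolding eventually_nhds_metric dist_real_def by (auto simp: dist_commute)
  have "ball p d \<subseteq> S"
    using close by (auto simp: dist_commute)
  with mixed_second_derivatives_meet[OF d this f1 f2]
  obtain c c' where "dist c p < d" "dist c' p < d" "f2 c u v = f2 c' v u"
    by blast
  with close[of c] close[of c'] show False
    unfolding e_def by (auto simp: abs_if split: if_splits)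
qed

lemma smooth_on_differentiable:
  assumes "smooth_on U f" "open U" "q \<in> U"
  shows "f differentiable (at q)" "(\<lambda>q. frechet_derivative f (at q) v) differentiable (at q)"
proof -
  have "Ck 2 U f"
    using assms(1) unfolding smooth_on_def by blast
  then have "f differentiable_on U" "(\<lambda>q. frechet_derivative f (at q) v) differentiable_on U"
    by (simp_all add: numeral_2_eq_2)
  then show "f differentiable (at q)" "(\<lambda>q. frechet_derivative f (at q) v) differentiable (at q)"
    using differentiable_on_eq_differentiable_at[OF assms(2)] assms(3) by blast+
qed

lemma smooth_on_second_derivative_commute:
  fixes f :: "'a::real_normed_vector \<Rightarrow> 'b::euclidean_space"
  assumes f: "smooth_on U f" and U: "open U" "p \<in> U"
  shows "frechet_derivative (\<lambda>r. frechet_derivative f (at r) v) (at p) u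
       = frechet_derivative (\<lambda>r. frechet_derivative f (at r) u) (at p) v"
proof (rule euclidean_eqI)
  fix b :: 'b
  show "frechet_derivative (\<lambda>r. frechet_derivative f (at r) v) (at p) u \<bullet> b
      = frechet_derivative (\<lambda>r. frechet_derivative f (at r) u) (at p) v \<bullet> b"
  proof (rule second_derivative_symmetric[OF U, of "\<lambda>r. f r \<bullet> b"])
    show "((\<lambda>r. f r \<bullet> b) has_derivative (\<lambda>w. frechet_derivative f (at q) w \<bullet> b)) (at q)"
      if "q \<in> U" for q
      by (rule has_derivative_inner_left[OF has_derivative_frechet_derivative])
        (rule smooth_on_differentiable(1)[OF f U(1) that])
    show "((\<lambda>r. frechet_derivative f (at r) w \<bullet> b) has_derivative
        (\<lambda>z. frechet_derivative (\<lambda>r. frechet_derivative f (at r) w) (at q) z \<bullet> b)) (at q)"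
      if "q \<in> U" for q w
      by (rule has_derivative_inner_left[OF has_derivative_frechet_derivative])
        (rule smooth_on_differentiable(2)[OF f U(1) that])
    have "Ck 2 U f"
      using f unfolding smooth_on_def by blast
    then show "continuous_on U
        (\<lambda>q. frechet_derivative (\<lambda>r. frechet_derivative f (at r) w) (at q) z \<bullet> b)" for w z
      by (intro bounded_linear.continuous_on[OF bounded_linear_inner_left])
        (simp add: numeral_2_eq_2)
  qed
qed

lemma bounded_linear_matrix_vector_mult_left: "bounded_linear (\<lambda>M::real^'n^'m. M *v b)"
proof -
  have "linear (\<lambda>M::real^'n^'m. M *v b)"
    by (rule linearI) (simp_all add: matrix_vector_mult_add_rdistrib scaleR_matrix_vector_assoc)
  then show ?thesis
    by (simp add: linear_conv_bounded_linear)
qed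

lemma bounded_linear_inner_matrix_vector_mult: "bounded_linear (\<lambda>M::real^'n^'m. x \<bullet> (M *v y))"
  by (rule bounded_linear_compose[OF bounded_linear_inner_right
        bounded_linear_matrix_vector_mult_left])

lemma differentiable_vec_lambda:
  assumes "\<And>k. h k differentiable (at q)"
  shows "(\<lambda>r. (\<chi> k. h k r)::real^'n) differentiable (at q)"
proof -
  have "\<forall>i\<in>Basis. (\<lambda>r. (\<chi> k. h k r) \<bullet> i) differentiable (at q)"
  proof
    fix i :: "real^'n" assume "i \<in> Basis"
    then obtain k where "i = axis k 1" by (auto simp: Basis_vec_def)
    then show "(\<lambda>r. (\<chi> k. h k r) \<bullet> i) differentiable (at q)"
      using assms by (simp add: inner_axis)
  qed
  then show ?thesis
    using differentiable_componentwise_within by blast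
qed

lemma differentiable_det:
  fixes M :: "'a::real_normed_vector \<Rightarrow> real^'n^'n"
  assumes "\<And>i j. (\<lambda>r. M r $ i $ j) differentiable (at q)"
  shows "(\<lambda>r. det (M r)) differentiable (at q)"
proof -
  have "(\<lambda>r. \<Prod>i\<in>UNIV. M r $ i $ \<sigma> i) differentiable (at q)" for \<sigma>
    by (rule differentiableI, rule has_derivative_prod, rule has_derivative_frechet_derivative)
      (rule assms)
  then show ?thesis
    unfolding det_def by (intro differentiable_sum differentiable_mult differentiable_const) auto
qed

lemma matrix_inv_right:
  assumes "invertible (A::real^'n^'n)"
  shows "A ** matrix_inv A = mat 1"
proof -
  have "\<exists>A'. A ** A' = mat 1 \<and> A' ** A = mat 1"
    using assms unfolding invertible_def by blast
  then have "A ** matrix_inv A = mat 1 \<and> matrix_inv A ** A = mat 1"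
    unfolding matrix_inv_def by (rule someI_ex)
  then show ?thesis by blast
qed

section \<open>Riemannian metrics in a chart\<close>

lemma gm_add_left: "gm G q (a + b) c = gm G q a c + gm G q b c"
  and gm_add_right: "gm G q a (b + c) = gm G q a b + gm G q a c"
  and gm_diff_left: "gm G q (a - b) c = gm G q a c - gm G q b c"
  and gm_diff_right: "gm G q a (b - c) = gm G q a b - gm G q a c"
  and gm_scaleR_left: "gm G q (s *\<^sub>R a) c = s * gm G q a c"
  and gm_scaleR_right: "gm G q a (s *\<^sub>R c) = s * gm G q a c"
  and gm_minus_left: "gm G q (- a) c = - gm G q a c"
  and gm_zero_left: "gm G q 0 c = 0"
  and gm_zero_right: "gm G q a 0 = 0"
  unfolding gm_def
  by (simp_all add: inner_add_left inner_add_right matrix_vector_right_distrib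
      matrix_vector_mult_diff_distrib inner_diff_left inner_diff_right matrix_vector_mult_scaleR)

lemmas gm_simps = gm_add_left gm_add_right gm_diff_left gm_diff_right gm_scaleR_left
  gm_scaleR_right gm_minus_left gm_zero_left gm_zero_right

lemma dgm_add_left: "dgm G q w (a + a') b = dgm G q w a b + dgm G q w a' b"
  and dgm_add_right: "dgm G q w a (b + b') = dgm G q w a b + dgm G q w a b'"
  and dgm_scaleR_left: "dgm G q w (c *\<^sub>R a) b = c * dgm G q w a b"
  and dgm_scaleR_right: "dgm G q w a (c *\<^sub>R b) = c * dgm G q w a b"
  unfolding dgm_def
  by (simp_all add: inner_add_left inner_add_right matrix_vector_right_distrib
      matrix_vector_mult_scaleR)

lemma orthonormal_list3D:
  assumes "orthonormal_list G p [a, b, c]"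
  shows "gm G p a a = 1" "gm G p b b = 1" "gm G p c c = 1"
    "gm G p a b = 0" "gm G p a c = 0" "gm G p b c = 0"
  using assms[unfolded orthonormal_list_def, rule_format, of 0 0]
    assms[unfolded orthonormal_list_def, rule_format, of 1 1]
    assms[unfolded orthonormal_list_def, rule_format, of 2 2]
    assms[unfolded orthonormal_list_def, rule_format, of 0 1]
    assms[unfolded orthonormal_list_def, rule_format, of 0 2]
    assms[unfolded orthonormal_list_def, rule_format, of 1 2]
  by (simp_all add: numeral_2_eq_2)

locale riemannian_chart =
  fixes U :: "(real^'n) set" and G :: "real^'n \<Rightarrow> real^'n^'n"
  assumes open_U: "open U" and riemannian: "riemannian_metric_on U G"
begin

lemma G_smooth: "smooth_on U G"
  and G_symmetric: "q \<in> U \<Longrightarrow> transpose (G q) = G q"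
  and gm_pos: "q \<in> U \<Longrightarrow> v \<noteq> 0 \<Longrightarrow> gm G q v v > 0"
  using riemannian unfolding riemannian_metric_on_def by auto

lemma gm_commute: assumes q: "q \<in> U" shows "gm G q a b = gm G q b a"
proof -
  have "a v* G q = G q *v a"
    using vector_transpose_matrix[of a "G q"] G_symmetric[OF q] by simp
  then show ?thesis
    unfolding gm_def by (metis dot_lmul_matrix inner_commute)
qed

lemma gm_eqI:
  assumes q: "q \<in> U" and eq: "\<And>w. gm G q x w = gm G q y w"
  shows "x = y"
proof (rule ccontr)
  assume "x \<noteq> y"
  then have "gm G q (x - y) (x - y) > 0"
    using gm_pos[OF q] by simp
  moreover have "gm G q (x - y) (x - y) = 0"
    using eq[of "x - y"] by (simp add: gm_diff_left)
  ultimately show False by simp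
qed

lemma invertible_G: assumes q: "q \<in> U" shows "invertible (G q)"
proof -
  have "x = 0" if "G q *v x = 0" for x
    using that gm_pos[OF q, of x] unfolding gm_def by (cases "x = 0") auto
  then obtain B where "B ** G q = mat 1"
    using matrix_left_invertible_ker by blast
  then show ?thesis
    using matrix_left_right_inverse unfolding invertible_def by blast
qed

lemma G_matrix_inv_cancel: "q \<in> U \<Longrightarrow> G q *v (matrix_inv (G q) *v y) = y"
  using matrix_inv_right[OF invertible_G] by (simp add: matrix_vector_mul_assoc)

lemma orthonormal_list4I:
  assumes "q \<in> U" "gm G q a a = 1" "gm G q b b = 1" "gm G q c c = 1" "gm G q d d = 1"
    "gm G q a b = 0" "gm G q a c = 0" "gm G q a d = 0" "gm G q b c = 0" "gm G q b d = 0"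
    "gm G q c d = 0"
  shows "orthonormal_list G q [a, b, c, d]"
  unfolding orthonormal_list_def
proof (intro allI impI)
  fix i j assume "i < length [a, b, c, d]" "j < length [a, b, c, d]"
  then have "i \<in> {0, 1, 2, 3}" "j \<in> {0, 1, 2, 3}" by auto
  then show "gm G q ([a, b, c, d] ! i) ([a, b, c, d] ! j) = (if i = j then 1 else 0)"
    using assms gm_commute[OF assms(1)] by (auto simp: numeral_2_eq_2 numeral_3_eq_3)
qed

abbreviation DG :: "real^'n \<Rightarrow> real^'n \<Rightarrow> real^'n^'n"
  where "DG q w \<equiv> frechet_derivative G (at q) w"

lemma G_differentiable: "q \<in> U \<Longrightarrow> G differentiable (at q)"
  and DG_differentiable: "q \<in> U \<Longrightarrow> (\<lambda>r. DG r w) differentiable (at q)"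
  using smooth_on_differentiable[OF G_smooth open_U] by blast+

lemma dgm_commute: assumes q: "q \<in> U" shows "dgm G q w a b = dgm G q w b a"
proof -
  note bl = bounded_linear_inner_matrix_vector_mult and dG = G_differentiable[OF q]
  have "dgm G q w a b = frechet_derivative (\<lambda>r. a \<bullet> (G r *v b)) (at q) w"
    unfolding dgm_def by (rule frechet_derivative_bounded_linear_compose[OF bl dG, symmetric])
  also have "\<dots> = frechet_derivative (\<lambda>r. b \<bullet> (G r *v a)) (at q) w"
  proof -
    have "frechet_derivative (\<lambda>r. a \<bullet> (G r *v b)) (at q)
        = frechet_derivative (\<lambda>r. b \<bullet> (G r *v a)) (at q)"
      by (rule frechet_derivative_transform_within_open[OF
            differentiable_bounded_linear_compose[OF bl dG] open_U q])
        (metis gm_commute gm_def)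
    then show ?thesis by simp
  qed
  also have "\<dots> = dgm G q w b a"
    unfolding dgm_def by (rule frechet_derivative_bounded_linear_compose[OF bl dG])
  finally show ?thesis .
qed

lemma dgm_add_dir: "q \<in> U \<Longrightarrow> dgm G q (w + w') a b = dgm G q w a b + dgm G q w' a b"
  and dgm_scaleR_dir: "q \<in> U \<Longrightarrow> dgm G q (c *\<^sub>R w) a b = c * dgm G q w a b"
  using linear_frechet_derivative[OF G_differentiable] unfolding dgm_def
  by (simp_all add: linear_add linear_scale matrix_vector_mult_add_rdistrib inner_add_right
      scaleR_matrix_vector_assoc[symmetric])

abbreviation \<Gamma> :: "real^'n \<Rightarrow> real^'n \<Rightarrow> real^'n \<Rightarrow> real^'n"
  where "\<Gamma> q u v \<equiv> Christoffel G q u v"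

lemma gm_Christoffel:
  assumes q: "q \<in> U"
  shows "gm G q (\<Gamma> q u v) w = (dgm G q u v w + dgm G q v u w - dgm G q w u v) / 2"
proof -
  define L where "L y = (dgm G q u v y + dgm G q v u y - dgm G q y u v) / 2" for y
  have lin: "linear L"
    unfolding L_def
    by (rule linearI) (simp_all add: dgm_add_right dgm_add_dir[OF q] dgm_scaleR_right
        dgm_scaleR_dir[OF q] field_simps)
  have "G q *v \<Gamma> q u v = (\<chi> k. L (axis k 1))"
    unfolding Christoffel_def G_matrix_inv_cancel[OF q] L_def ..
  then have "gm G q (\<Gamma> q u v) w = (\<Sum>k\<in>UNIV. w $ k * L (axis k 1))"
    using gm_commute[OF q] unfolding gm_def inner_vec_def by simp
  also have "\<dots> = L (\<Sum>k\<in>UNIV. w $ k *\<^sub>R axis k 1)"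
    by (simp add: linear_sum[OF lin] linear_scale[OF lin] o_def)
  also have "\<dots> = L w"
    using basis_expansion[of w] by (simp add: scalar_mult_eq_scaleR)
  finally show ?thesis
    unfolding L_def .
qed

lemma Christoffel_commute: assumes q: "q \<in> U" shows "\<Gamma> q u v = \<Gamma> q v u"
  by (rule gm_eqI[OF q]) (simp add: gm_Christoffel[OF q] dgm_commute[OF q, of _ u v])

lemma Christoffel_add_right:
  assumes q: "q \<in> U" shows "\<Gamma> q u (v + v') = \<Gamma> q u v + \<Gamma> q u v'"
  by (rule gm_eqI[OF q])
    (simp add: gm_add_left gm_Christoffel[OF q] dgm_add_left dgm_add_right dgm_add_dir[OF q]
      field_simps)

lemma Christoffel_scaleR_right:
  assumes q: "q \<in> U" shows "\<Gamma> q u (c *\<^sub>R v) = c *\<^sub>R \<Gamma> q u v"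
  by (rule gm_eqI[OF q])
    (simp add: gm_scaleR_left gm_Christoffel[OF q] dgm_scaleR_left dgm_scaleR_right
      dgm_scaleR_dir[OF q] algebra_simps)

lemma Christoffel_add_left: "q \<in> U \<Longrightarrow> \<Gamma> q (u + u') v = \<Gamma> q u v + \<Gamma> q u' v"
  by (metis Christoffel_add_right Christoffel_commute)

lemma Christoffel_scaleR_left: "q \<in> U \<Longrightarrow> \<Gamma> q (c *\<^sub>R u) v = c *\<^sub>R \<Gamma> q u v"
  by (metis Christoffel_scaleR_right Christoffel_commute)

lemma linear_Christoffel: "q \<in> U \<Longrightarrow> linear (\<Gamma> q u)"
  by (rule linearI) (simp_all add: Christoffel_add_right Christoffel_scaleR_right)

lemma Christoffel_zero_right: "q \<in> U \<Longrightarrow> \<Gamma> q u 0 = 0"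
  using linear_0[OF linear_Christoffel] by blast

lemma dgm_Christoffel:
  "q \<in> U \<Longrightarrow> dgm G q u a b = gm G q (\<Gamma> q u a) b + gm G q (\<Gamma> q u b) a"
  using dgm_commute[of q u a b] dgm_commute[of q a u b] dgm_commute[of q b u a]
  by (simp add: gm_Christoffel field_simps)

text \<open>By Cramer's rule the Christoffel symbols are rational functions of the entries of \<open>G\<close>
  and their first derivatives.\<close>
lemma differentiable_Christoffel:
  assumes q: "q \<in> U"
  shows "(\<lambda>r. \<Gamma> r u v) differentiable (at q)"
proof -
  define c where "c r = (\<chi> k. (dgm G r u v (axis k 1) + dgm G r v u (axis k 1)
      - dgm G r (axis k 1) u v) / 2)" for r
  define F where "F r = (\<chi> k. det (\<chi> i j. if j = k then c r $ i else G r $ i $ j) / det (G r))" for r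
  have G_entry: "(\<lambda>r. G r $ i $ j) differentiable (at q)" for i j
    by (rule differentiable_bounded_linear_compose[OF _ G_differentiable[OF q]])
      (rule bounded_linear_compose[OF bounded_linear_vec_nth bounded_linear_vec_nth])
  have dgm_entry: "(\<lambda>r. dgm G r w a b) differentiable (at q)" for w a b
    unfolding dgm_def
    by (rule differentiable_bounded_linear_compose[OF bounded_linear_inner_matrix_vector_mult
          DG_differentiable[OF q]])
  have c_entry: "(\<lambda>r. c r $ i) differentiable (at q)" for i
    unfolding c_def vec_lambda_beta
    by (intro differentiable_divide differentiable_add differentiable_diff dgm_entry
        differentiable_const) simp
  have entry: "(\<lambda>r. (\<chi> i j. if j = k then c r $ i else G r $ i $ j) $ i $ j) differentiable (at q)"
    for k i j
    by (cases "j = k") (simp_all only: vec_lambda_beta if_True if_False simp_thms c_entry G_entry)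
  have "(\<lambda>r. det (\<chi> i j. if j = k then c r $ i else G r $ i $ j) / det (G r)) differentiable (at q)"
    for k
    using invertible_det_nz[THEN iffD1, OF invertible_G[OF q]]
    by (intro differentiable_divide differentiable_det entry G_entry)
  then have "F differentiable (at q)"
    unfolding F_def by (rule differentiable_vec_lambda)
  moreover have "F r = \<Gamma> r u v" if r: "r \<in> U" for r
  proof -
    have "G r *v \<Gamma> r u v = c r"
      unfolding Christoffel_def G_matrix_inv_cancel[OF r] c_def ..
    with cramer[OF invertible_det_nz[THEN iffD1, OF invertible_G[OF r]]] show ?thesis
      unfolding F_def by (rule sym[OF iffD1])
  qed
  ultimately show ?thesis
    by (rule differentiable_transform_within_open[OF _ open_U q])
qed

abbreviation D\<Gamma> :: "real^'n \<Rightarrow> real^'n \<Rightarrow> real^'n \<Rightarrow> real^'n \<Rightarrow> real^'n"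
  where "D\<Gamma> p z u v \<equiv> frechet_derivative (\<lambda>r. \<Gamma> r u v) (at p) z"

abbreviation d2gm :: "real^'n \<Rightarrow> real^'n \<Rightarrow> real^'n \<Rightarrow> real^'n \<Rightarrow> real^'n \<Rightarrow> real"
  where "d2gm p z w a b \<equiv> a \<bullet> (frechet_derivative (\<lambda>r. DG r w) (at p) z *v b)"

lemma gm_DChristoffel:
  assumes p: "p \<in> U"
  shows "gm G p (D\<Gamma> p z u v) w + dgm G p z (\<Gamma> p u v) w
    = (d2gm p z u v w + d2gm p z v u w - d2gm p z w u v) / 2"
proof -
  have d2gm: "((\<lambda>r. a \<bullet> (DG r x *v b)) has_derivative (\<lambda>h. d2gm p h x a b)) (at p)" for a b x
    by (rule bounded_linear.has_derivative[OF bounded_linear_inner_matrix_vector_mult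
          has_derivative_frechet_derivative[OF DG_differentiable[OF p]]])
  have "((\<lambda>r. 2 * (\<Gamma> r u v \<bullet> (G r *v w))) has_derivative
      (\<lambda>h. 2 * (\<Gamma> p u v \<bullet> (DG p h *v w) + D\<Gamma> p h u v \<bullet> (G p *v w)))) (at p)"
    by (intro has_derivative_mult_right has_derivative_inner
        has_derivative_frechet_derivative[OF differentiable_Christoffel[OF p]]
        bounded_linear.has_derivative[OF bounded_linear_matrix_vector_mult_left]
        has_derivative_frechet_derivative[OF G_differentiable[OF p]])
  moreover have "((\<lambda>r. v \<bullet> (DG r u *v w) + u \<bullet> (DG r v *v w) - u \<bullet> (DG r w *v v)) has_derivative
      (\<lambda>h. d2gm p h u v w + d2gm p h v u w - d2gm p h w u v)) (at p)"
    by (intro has_derivative_diff has_derivative_add d2gm)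
  moreover have "2 * (\<Gamma> r u v \<bullet> (G r *v w))
      = v \<bullet> (DG r u *v w) + u \<bullet> (DG r v *v w) - u \<bullet> (DG r w *v v)"
    if "r \<in> U" for r
    using gm_Christoffel[OF that, of u v w] unfolding gm_def dgm_def by simp
  ultimately have "2 * (\<Gamma> p u v \<bullet> (DG p z *v w) + D\<Gamma> p z u v \<bullet> (G p *v w))
      = d2gm p z u v w + d2gm p z v u w - d2gm p z w u v"
    by (rule has_derivative_eq_on_open[OF _ _ open_U p])
  then show ?thesis
    unfolding gm_def dgm_def by (simp add: field_simps)
qed

lemma DChristoffel_commute: "p \<in> U \<Longrightarrow> D\<Gamma> p z u v = D\<Gamma> p z v u"
  using frechet_derivative_transform_within_open[OF differentiable_Christoffel open_U]
    Christoffel_commute by metis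

lemma linear_DChristoffel: "p \<in> U \<Longrightarrow> linear (D\<Gamma> p z u)"
  using linear_frechet_derivative_linear_family[OF open_U _ linear_Christoffel
      differentiable_Christoffel]
  by blast

lemma DChristoffel_add_right: "p \<in> U \<Longrightarrow> D\<Gamma> p z u (v + v') = D\<Gamma> p z u v + D\<Gamma> p z u v'"
  and DChristoffel_scaleR_right: "p \<in> U \<Longrightarrow> D\<Gamma> p z u (c *\<^sub>R v) = c *\<^sub>R D\<Gamma> p z u v"
  using linear_DChristoffel linear_add linear_scale by blast+

lemma DChristoffel_add_left: "p \<in> U \<Longrightarrow> D\<Gamma> p z (u + u') v = D\<Gamma> p z u v + D\<Gamma> p z u' v"
  and DChristoffel_scaleR_left: "p \<in> U \<Longrightarrow> D\<Gamma> p z (c *\<^sub>R u) v = c *\<^sub>R D\<Gamma> p z u v"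
  by (metis DChristoffel_add_right DChristoffel_commute,
      metis DChristoffel_scaleR_right DChristoffel_commute)

lemma DChristoffel_add_dir: "p \<in> U \<Longrightarrow> D\<Gamma> p (z + z') u v = D\<Gamma> p z u v + D\<Gamma> p z' u v"
  and DChristoffel_scaleR_dir: "p \<in> U \<Longrightarrow> D\<Gamma> p (c *\<^sub>R z) u v = c *\<^sub>R D\<Gamma> p z u v"
  using linear_frechet_derivative[OF differentiable_Christoffel] linear_add linear_scale by blast+

lemma d2gm_commute: "p \<in> U \<Longrightarrow> d2gm p z w a b = d2gm p w z a b"
  by (simp add: smooth_on_second_derivative_commute[OF G_smooth open_U])

lemma curv_Christoffel:
  "curv G p u v w = D\<Gamma> p u v w + \<Gamma> p u (\<Gamma> p v w) - D\<Gamma> p v u w - \<Gamma> p v (\<Gamma> p u w)"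
  unfolding curv_def nabla_def by (simp add: diff_diff_eq)

lemma curv_antisym: "curv G p u v w = - curv G p v u w"
  unfolding curv_Christoffel by (simp add: algebra_simps)

text \<open>Via the derivative of the Koszul formula and metric compatibility, both sides become the
  same expression in the second derivatives of \<open>G\<close>, which commute, and the Christoffel symbols.\<close>
lemma gm_curv_antisym:
  assumes p: "p \<in> U"
  shows "gm G p (curv G p u v w) z = - gm G p (curv G p u v z) w"
proof -
  note D = gm_DChristoffel[OF p]
  note C = dgm_Christoffel[OF p]
  have "d2gm p u v w z = d2gm p v u w z" "d2gm p u v z w = d2gm p v u z w"
    by (simp_all add: d2gm_commute[OF p])
  moreover have "gm G p (\<Gamma> p u z) (\<Gamma> p v w) = gm G p (\<Gamma> p v w) (\<Gamma> p u z)"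
    "gm G p (\<Gamma> p u w) (\<Gamma> p v z) = gm G p (\<Gamma> p v z) (\<Gamma> p u w)"
    by (simp_all add: gm_commute[OF p])
  ultimately show ?thesis
    unfolding curv_Christoffel gm_simps
    using D[of v w u z] D[of v z u w] D[of u w v z] D[of u z v w]
      C[of u "\<Gamma> p v w" z] C[of u "\<Gamma> p v z" w] C[of v "\<Gamma> p u w" z] C[of v "\<Gamma> p u z" w]
    by argo
qed

lemma curv_Bianchi:
  assumes p: "p \<in> U"
  shows "curv G p u v w + curv G p v w u + curv G p w u v = 0"
proof -
  have "D\<Gamma> p v w u = D\<Gamma> p v u w" "D\<Gamma> p w v u = D\<Gamma> p w u v" "D\<Gamma> p u w v = D\<Gamma> p u v w"
    "\<Gamma> p w u = \<Gamma> p u w" "\<Gamma> p v u = \<Gamma> p u v" "\<Gamma> p w v = \<Gamma> p v w"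
    using DChristoffel_commute[OF p] Christoffel_commute[OF p] by blast+
  then show ?thesis
    unfolding curv_Christoffel by (simp add: algebra_simps)
qed

lemma curv_add_third: "p \<in> U \<Longrightarrow> curv G p u v (w + w') = curv G p u v w + curv G p u v w'"
  unfolding curv_Christoffel
  by (simp add: DChristoffel_add_right Christoffel_add_right algebra_simps)

lemma curv_scaleR_third: "p \<in> U \<Longrightarrow> curv G p u v (c *\<^sub>R w) = c *\<^sub>R curv G p u v w"
  unfolding curv_Christoffel
  by (simp add: DChristoffel_scaleR_right Christoffel_scaleR_right algebra_simps)

lemma curv_add_second: "p \<in> U \<Longrightarrow> curv G p u (v + v') w = curv G p u v w + curv G p u v' w"
  unfolding curv_Christoffel
  by (simp add: DChristoffel_add_left DChristoffel_add_dir Christoffel_add_left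
      Christoffel_add_right algebra_simps)

lemma curv_scaleR_second: "p \<in> U \<Longrightarrow> curv G p u (c *\<^sub>R v) w = c *\<^sub>R curv G p u v w"
  unfolding curv_Christoffel
  by (simp add: DChristoffel_scaleR_left DChristoffel_scaleR_dir Christoffel_scaleR_left
      Christoffel_scaleR_right algebra_simps)

lemma curv_scaleR_first: "p \<in> U \<Longrightarrow> curv G p (c *\<^sub>R u) v w = c *\<^sub>R curv G p u v w"
  by (metis curv_antisym curv_scaleR_second scaleR_minus_right)

lemma Kcurv_commute:
  assumes p: "p \<in> U"
  shows "Kcurv G p u v = Kcurv G p v u"
proof -
  have "Kcurv G p v u = - gm G p (curv G p u v u) v"
    unfolding Kcurv_def by (subst curv_antisym) (rule gm_minus_left)
  also have "\<dots> = Kcurv G p u v"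
    unfolding Kcurv_def using gm_curv_antisym[OF p, of u v u v] by simp
  finally show ?thesis ..
qed

lemma Kcurv_scaleR_left: "p \<in> U \<Longrightarrow> Kcurv G p (c *\<^sub>R u) v = c\<^sup>2 * Kcurv G p u v"
  unfolding Kcurv_def
  by (simp add: curv_scaleR_first gm_scaleR_left gm_scaleR_right power2_eq_square)

end

section \<open>Sasakian structures in a chart\<close>

locale sasakian_chart =
  fixes U :: "(real^'n) set" and G Phi :: "real^'n \<Rightarrow> real^'n^'n"
    and xi eta :: "real^'n \<Rightarrow> real^'n"
  assumes sasakian: "sasakian_on U G Phi xi eta"

sublocale sasakian_chart \<subseteq> riemannian_chart U G
  using sasakian
  by unfold_locales (auto simp: sasakian_on_def contact_metric_on_def almost_contact_metric_on_def)

context sasakian_chart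
begin

lemma Phi_smooth: "smooth_on U Phi"
  and xi_smooth: "smooth_on U xi"
  and eta_xi: "q \<in> U \<Longrightarrow> eta q \<bullet> xi q = 1"
  and Phi_Phi: "q \<in> U \<Longrightarrow> Phi q *v (Phi q *v v) = - v + (eta q \<bullet> v) *\<^sub>R xi q"
  and gm_Phi_Phi: "q \<in> U \<Longrightarrow> gm G q (Phi q *v u) (Phi q *v v) = gm G q u v - (eta q \<bullet> u) * (eta q \<bullet> v)"
  and nabla_phi_eq: "q \<in> U \<Longrightarrow> nabla_phi G Phi q u v = gm G q u v *\<^sub>R xi q - (eta q \<bullet> v) *\<^sub>R u"
  using sasakian unfolding sasakian_on_def contact_metric_on_def almost_contact_metric_on_def
  by auto

lemma Phi_differentiable: "q \<in> U \<Longrightarrow> Phi differentiable (at q)"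
  using smooth_on_differentiable[OF Phi_smooth open_U] by blast

lemma xi_differentiable: "q \<in> U \<Longrightarrow> xi differentiable (at q)"
  and Dxi_differentiable: "q \<in> U \<Longrightarrow> (\<lambda>r. frechet_derivative xi (at r) v) differentiable (at q)"
  using smooth_on_differentiable[OF xi_smooth open_U] by blast+

lemma Phi_xi: assumes q: "q \<in> U" shows "Phi q *v xi q = 0"
proof -
  define y where "y = Phi q *v xi q"
  have Phi_y: "Phi q *v y = 0"
    unfolding y_def using Phi_Phi[OF q, of "xi q"] eta_xi[OF q] by simp
  have "0 = - y + (eta q \<bullet> y) *\<^sub>R xi q"
    using Phi_Phi[OF q, of y] Phi_y by simp
  then have y: "y = (eta q \<bullet> y) *\<^sub>R xi q"
    by (simp add: eq_neg_iff_add_eq_0 add.commute)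
  have "(eta q \<bullet> y) *\<^sub>R y = Phi q *v ((eta q \<bullet> y) *\<^sub>R xi q)"
    unfolding y_def by (simp add: matrix_vector_mult_scaleR)
  then have "(eta q \<bullet> y) *\<^sub>R y = 0"
    using Phi_y y by simp
  with y show ?thesis
    unfolding y_def by auto
qed

lemma eta_eq_gm_xi: "q \<in> U \<Longrightarrow> eta q \<bullet> u = gm G q u (xi q)"
  using gm_Phi_Phi[of q u "xi q"] Phi_xi eta_xi by (simp add: gm_zero_right)

lemma gm_xi_xi: "q \<in> U \<Longrightarrow> gm G q (xi q) (xi q) = 1"
  using eta_eq_gm_xi eta_xi by simp

lemma eta_Phi: assumes q: "q \<in> U" shows "eta q \<bullet> (Phi q *v v) = 0"
proof -
  have "Phi q *v (Phi q *v (Phi q *v v)) = - (Phi q *v v)"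
    unfolding Phi_Phi[OF q]
    by (simp add: matrix_vector_mult_diff_distrib matrix_vector_mult_scaleR Phi_xi[OF q])
  then have "(eta q \<bullet> (Phi q *v v)) *\<^sub>R xi q = 0"
    using Phi_Phi[OF q, of "Phi q *v v"] by simp
  then show ?thesis
    using eta_xi[OF q] by auto
qed

lemma Phi_nabla_xi:
  assumes q: "q \<in> U"
  shows "Phi q *v nabla G u xi q = u - (eta q \<bullet> u) *\<^sub>R xi q"
proof -
  let ?DPhi = "frechet_derivative (\<lambda>r. Phi r *v xi q) (at q) u"
  have "((\<lambda>r. Phi r *v xi r) has_derivative
      (\<lambda>h. frechet_derivative (\<lambda>r. Phi r *v xi q) (at q) h + Phi q *v frechet_derivative xi (at q) h)) (at q)"
    by (rule has_derivative_linear_family_apply[OF open_U q])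
      (auto intro: differentiable_bounded_linear_compose[OF bounded_linear_matrix_vector_mult_left
          Phi_differentiable[OF q]] xi_differentiable[OF q])
  then have "?DPhi + Phi q *v frechet_derivative xi (at q) u = 0"
    using has_derivative_eq_on_open[OF _ has_derivative_const open_U q] Phi_xi by blast
  then have Dxi: "Phi q *v frechet_derivative xi (at q) u = - ?DPhi"
    by (simp add: eq_neg_iff_add_eq_0 add.commute)
  have "?DPhi - Phi q *v \<Gamma> q u (xi q) = (eta q \<bullet> u) *\<^sub>R xi q - u"
    using nabla_phi_eq[OF q, of u "xi q"] eta_xi[OF q] eta_eq_gm_xi[OF q, of u]
    unfolding nabla_phi_def nabla_def by (simp add: Phi_xi[OF q] Christoffel_zero_right[OF q])
  then have \<Gamma>_xi: "Phi q *v \<Gamma> q u (xi q) = ?DPhi - ((eta q \<bullet> u) *\<^sub>R xi q - u)"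
    by (simp add: algebra_simps)
  show ?thesis
    unfolding nabla_def matrix_vector_right_distrib Dxi \<Gamma>_xi by simp
qed

lemma eta_nabla_xi:
  assumes q: "q \<in> U"
  shows "eta q \<bullet> nabla G u xi q = 0"
proof -
  let ?Dxi = "frechet_derivative xi (at q) u"
  have "((\<lambda>r. G r *v xi r) has_derivative
      (\<lambda>h. frechet_derivative (\<lambda>r. G r *v xi q) (at q) h + G q *v frechet_derivative xi (at q) h)) (at q)"
    by (rule has_derivative_linear_family_apply[OF open_U q])
      (auto intro: differentiable_bounded_linear_compose[OF bounded_linear_matrix_vector_mult_left
          G_differentiable[OF q]] xi_differentiable[OF q])
  from has_derivative_inner[OF has_derivative_frechet_derivative[OF xi_differentiable[OF q]] this]
  have "xi q \<bullet> (frechet_derivative (\<lambda>r. G r *v xi q) (at q) u + G q *v ?Dxi) + ?Dxi \<bullet> (G q *v xi q) = 0"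
    using has_derivative_eq_on_open[OF _ has_derivative_const open_U q] gm_xi_xi unfolding gm_def
    by blast
  moreover have "frechet_derivative (\<lambda>r. G r *v xi q) (at q) u = DG q u *v xi q"
    by (rule frechet_derivative_bounded_linear_compose[OF bounded_linear_matrix_vector_mult_left
          G_differentiable[OF q]])
  ultimately have "dgm G q u (xi q) (xi q) + 2 * gm G q ?Dxi (xi q) = 0"
    using gm_commute[OF q, of "xi q" ?Dxi] unfolding dgm_def gm_def by (simp add: inner_add_right)
  then show ?thesis
    unfolding eta_eq_gm_xi[OF q] nabla_def gm_add_left dgm_Christoffel[OF q] by simp
qed

lemma nabla_xi:
  assumes q: "q \<in> U"
  shows "nabla G u xi q = - (Phi q *v u)"
proof -
  have "Phi q *v (Phi q *v nabla G u xi q) = - nabla G u xi q"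
    using Phi_Phi[OF q] eta_nabla_xi[OF q] by simp
  moreover have "Phi q *v (Phi q *v nabla G u xi q) = Phi q *v u"
    unfolding Phi_nabla_xi[OF q]
    by (simp add: matrix_vector_mult_diff_distrib matrix_vector_mult_scaleR Phi_xi[OF q])
  ultimately show ?thesis
    by (metis minus_minus)
qed

text \<open>Differentiating \<open>\<nabla>\<xi> = - \<phi>\<close> and using the Sasakian condition once more; the second
  derivatives of \<open>\<xi>\<close> cancel by their symmetry.\<close>
lemma curv_xi:
  assumes p: "p \<in> U"
  shows "curv G p u v (xi p) = (eta p \<bullet> v) *\<^sub>R u - (eta p \<bullet> u) *\<^sub>R v"
proof -
  let ?D2xi = "\<lambda>u v. frechet_derivative (\<lambda>r. frechet_derivative xi (at r) v) (at p) u"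
  let ?DPhi = "\<lambda>u v. frechet_derivative (\<lambda>r. Phi r *v v) (at p) u"
  have Dxi: "frechet_derivative xi (at p) u = - (Phi p *v u) - \<Gamma> p u (xi p)" for u
    using nabla_xi[OF p, of u] unfolding nabla_def by (simp add: algebra_simps)
  have "D\<Gamma> p u v (xi p) + \<Gamma> p v (frechet_derivative xi (at p) u) = - ?DPhi u v - ?D2xi u v" for u v
  proof -
    have "((\<lambda>r. \<Gamma> r v (xi r)) has_derivative
        (\<lambda>h. D\<Gamma> p h v (xi p) + \<Gamma> p v (frechet_derivative xi (at p) h))) (at p)"
      by (rule has_derivative_linear_family_apply[OF open_U p])
        (auto intro: linear_Christoffel differentiable_Christoffel[OF p] xi_differentiable[OF p])
    moreover have "((\<lambda>r. - (Phi r *v v) - frechet_derivative xi (at r) v) has_derivative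
        (\<lambda>h. - ?DPhi h v - ?D2xi h v)) (at p)"
      by (intro has_derivative_diff has_derivative_minus has_derivative_frechet_derivative
          differentiable_bounded_linear_compose[OF bounded_linear_matrix_vector_mult_left
            Phi_differentiable[OF p]] Dxi_differentiable[OF p])
    moreover have "\<Gamma> r v (xi r) = - (Phi r *v v) - frechet_derivative xi (at r) v" if "r \<in> U" for r
      using nabla_xi[OF that, of v] unfolding nabla_def by (simp add: algebra_simps)
    ultimately show ?thesis
      using has_derivative_eq_on_open[OF _ _ open_U p] by blast
  qed
  then have D\<Gamma>_xi: "D\<Gamma> p u v (xi p)
      = - ?DPhi u v - ?D2xi u v + \<Gamma> p v (Phi p *v u) + \<Gamma> p v (\<Gamma> p u (xi p))" for u v
    unfolding Dxi linear_diff[OF linear_Christoffel[OF p]] linear_neg[OF linear_Christoffel[OF p]]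
    by (simp add: algebra_simps)
  have DPhi: "?DPhi u v
      = gm G p u v *\<^sub>R xi p - (eta p \<bullet> v) *\<^sub>R u - \<Gamma> p u (Phi p *v v) + Phi p *v \<Gamma> p u v" for u v
    using nabla_phi_eq[OF p, of u v] unfolding nabla_phi_def nabla_def by (simp add: algebra_simps)
  have "?D2xi u v = ?D2xi v u"
    by (rule smooth_on_second_derivative_commute[OF xi_smooth open_U p])
  moreover have "gm G p v u = gm G p u v" "\<Gamma> p v u = \<Gamma> p u v"
    by (simp_all add: gm_commute[OF p] Christoffel_commute[OF p])
  ultimately show ?thesis
    unfolding curv_Christoffel D\<Gamma>_xi DPhi by (simp add: algebra_simps)
qed

lemma curv_xi_horizontal:
  assumes p: "p \<in> U" and "eta p \<bullet> u = 0" "eta p \<bullet> v = 0"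
  shows "curv G p u (xi p) v = curv G p v (xi p) u"
  using curv_Bianchi[OF p, of u "xi p" v] curv_antisym[of p "xi p" v u] curv_xi[OF p, of v u]
    assms(2,3)
  by (simp add: algebra_simps)

lemma Kcurv_horizontal_split:
  fixes V W :: "real^'n"
  assumes p: "p \<in> U" and V: "eta p \<bullet> V = 0"
  defines "a \<equiv> eta p \<bullet> W"
  shows "Kcurv G p V W = Kcurv G p V (W - a *\<^sub>R xi p) + a\<^sup>2 * gm G p V V"
proof -
  define Z where "Z = W - a *\<^sub>R xi p"
  have W: "W = Z + a *\<^sub>R xi p"
    unfolding Z_def by simp
  have Z: "eta p \<bullet> Z = 0"
    unfolding Z_def a_def using eta_xi[OF p] by (simp add: inner_diff_right)
  have "curv G p V W W = curv G p V W (Z + a *\<^sub>R xi p)"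
    by (simp only: W[symmetric])
  also have "\<dots> = curv G p V W Z + a *\<^sub>R curv G p V W (xi p)"
    by (simp add: curv_add_third[OF p] curv_scaleR_third[OF p])
  also have "curv G p V W (xi p) = a *\<^sub>R V"
    unfolding curv_xi[OF p] V a_def by simp
  finally have "Kcurv G p V W = gm G p (curv G p V W Z) V + a\<^sup>2 * gm G p V V"
    unfolding Kcurv_def by (simp add: gm_add_left gm_scaleR_left power2_eq_square)
  moreover have "curv G p V W Z = curv G p V (Z + a *\<^sub>R xi p) Z"
    by (simp only: W[symmetric])
  then have "curv G p V W Z = curv G p V Z Z + a *\<^sub>R curv G p V (xi p) Z"
    by (simp add: curv_add_second[OF p] curv_scaleR_second[OF p])
  moreover have "gm G p (curv G p V (xi p) Z) V = 0"
    using curv_xi_horizontal[OF p V Z] gm_curv_antisym[OF p, of Z "xi p" V V] by simp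
  ultimately show ?thesis
    unfolding Kcurv_def Z_def[symmetric] by (simp add: gm_add_left gm_scaleR_left)
qed

lemma gm_Phi_self:
  assumes q: "q \<in> U"
  shows "gm G q u (Phi q *v u) = 0"
proof -
  have "gm G q (Phi q *v u) (Phi q *v (Phi q *v u)) = gm G q u (Phi q *v u)"
    using gm_Phi_Phi[OF q, of u "Phi q *v u"] eta_Phi[OF q] by simp
  moreover have "gm G q (Phi q *v u) (Phi q *v (Phi q *v u)) = - gm G q u (Phi q *v u)"
    unfolding Phi_Phi[OF q]
    by (simp add: gm_diff_right gm_scaleR_right eta_eq_gm_xi[OF q, symmetric] eta_Phi[OF q]
        gm_commute[OF q, of "Phi q *v u" u])
  ultimately show ?thesis
    by simp
qed

lemma nonneg_phi_bisectional_horizontal: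
  assumes nn: "nonneg_phi_bisectional_on U G Phi xi" and p: "p \<in> U"
    and X: "eta p \<bullet> X = 0" "gm G p X X = 1"
    and Z: "gm G p Z X = 0" "gm G p Z (Phi p *v X) = 0" "gm G p Z (xi p) = 0"
  shows "Kcurv G p Z X + Kcurv G p Z (Phi p *v X) \<ge> 0"
proof (cases "Z = 0")
  case True
  then show ?thesis
    unfolding Kcurv_def by (simp add: gm_zero_right)
next
  case False
  define c where "c = sqrt (gm G p Z Z)"
  have "gm G p Z Z > 0"
    using gm_pos[OF p False] .
  then have c: "c > 0" "c\<^sup>2 = gm G p Z Z"
    unfolding c_def by simp_all
  define E where "E = (1 / c) *\<^sub>R Z"
  have "orthonormal_list G p [E, X, Phi p *v X, xi p]"
    using X Z c gm_Phi_Phi[OF p, of X X] gm_Phi_self[OF p, of X] gm_xi_xi[OF p]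
      eta_eq_gm_xi[OF p, of X] eta_eq_gm_xi[OF p, of "Phi p *v X"] eta_Phi[OF p, of X]
    by (intro orthonormal_list4I[OF p])
      (auto simp: E_def gm_scaleR_left gm_scaleR_right power2_eq_square)
  then have "Kcurv G p E X + Kcurv G p E (Phi p *v X) \<ge> 0"
    using nn p unfolding nonneg_phi_bisectional_on_def by blast
  moreover have "Z = c *\<^sub>R E"
    unfolding E_def using c by simp
  ultimately show ?thesis
    by (simp add: Kcurv_scaleR_left[OF p] distrib_left[symmetric])
qed

end

theorem proposition3p9:
  fixes U :: "(real^'n) set" and G Phi :: "real^'n \<Rightarrow> real^'n^'n"
    and xi eta :: "real^'n \<Rightarrow> real^'n" and x X W :: "real^'n"
  assumes "sasakian_on U G Phi xi eta"
    and "nonneg_phi_bisectional_on U G Phi xi"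
    and "x \<in> U"
    and "eta x \<bullet> X = 0"
    and "orthonormal_list G x [X, Phi x *v X, W]"
  shows "Rtensor G x X W X W + Rtensor G x (Phi x *v X) W (Phi x *v X) W \<ge> 0"
proof -
  interpret sasakian_chart U G Phi xi eta
    using assms(1) by (rule sasakian_chart.intro)
  note x = \<open>x \<in> U\<close> and ON = orthonormal_list3D[OF assms(5)]
  define a where "a = eta x \<bullet> W"
  define Z where "Z = W - a *\<^sub>R xi x"
  have horizontal: "eta x \<bullet> X = 0" "eta x \<bullet> (Phi x *v X) = 0"
    using assms(4) eta_Phi[OF x] by simp_all
  have gm_Z: "gm G x Z V = gm G x W V - a * (eta x \<bullet> V)" for V
    unfolding Z_def by (simp add: gm_diff_left gm_scaleR_left eta_eq_gm_xi[OF x] gm_commute[OF x])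
  have "gm G x Z X = 0" "gm G x Z (Phi x *v X) = 0"
    using ON(5,6) horizontal by (simp_all add: gm_Z gm_commute[OF x, of W])
  moreover have "gm G x Z (xi x) = 0"
    by (simp add: gm_Z a_def eta_eq_gm_xi[OF x] gm_xi_xi[OF x])
  ultimately have "Kcurv G x Z X + Kcurv G x Z (Phi x *v X) \<ge> 0"
    by (rule nonneg_phi_bisectional_horizontal[OF assms(2) x assms(4) ON(1)])
  moreover have "Kcurv G x V W = Kcurv G x Z V + a\<^sup>2" if "eta x \<bullet> V = 0" "gm G x V V = 1" for V
    using Kcurv_horizontal_split[OF x that(1), of W] that(2) Kcurv_commute[OF x]
    unfolding Z_def a_def by simp
  ultimately show ?thesis
    unfolding Rtensor_def Kcurv_def[symmetric] using horizontal ON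
    by simp
qed

end
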